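(* Let $(N,+,* )$ be a nilpotent ring with adjoint operation $x\circ y=x+y+x*y$, let $S$ be a subring and $I$ a two-sided ideal of $N$ with $S\cap I=\{0\}$ and $N=S+I$. Then every $x\in N$ can be written uniquely as $x=s\circ i$ with $s\in S$, $i\in I$; define $x\bullet y=s\circ y\circ i$, so that $(N,+,\bullet)$ is a left brace, and let $r(x,y)=(\sigma_x(y),\tau_y(x))$ be its Yang–Baxter map. Let $X\subseteq N$ be such that $(X,r)$ is a solution of the set-theoretic Yang–Baxter equation, and let $J\subseteq I\cap X$ be a two-sided ideal of the ring $N$. Let $f,g:X\to X$ and $\wedge:X\times X\to X$ be maps and put $k(x)=f(x)\wedge g(x)$. Suppose that: $f$ is $\mathcal G(X,r)$-equivariant; $\sigma_x(y\wedge g(z))=\sigma_x(y)\wedge g(z)$ for all $x,y,z\in X$; $g(x+j)=g(x)$ whenever $x\in X$, $j\in J$, $x+j\in X$; and $k(x)-x\in J$ for all $x\in X$. Then $k$ is a reflection of $(X,r)$.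
   Context: A (left) brace is a triple $(B,+,\circ)$ with $(B,+)$ abelian group, $(B,\circ)$ group, and $x\circ(y+z)=x\circ y+x\circ z-x$. The Yang–Baxter map of the brace $(N,+,\bullet)$ is $r(x,y)=(\sigma_x(y),\tau_y(x))$ with $\sigma_x(y)=x\bullet y-x$ and $\tau_y(x)=(\sigma_x(y))^{-1}\bullet x-(\sigma_x(y))^{-1}$, inverses taken in $(N,\bullet)$. For $X\subseteq N$, $(X,r)$ is a solution of the set-theoretic Yang–Baxter equation if $r(X\times X)\subseteq X\times X$ and $(\mathrm{id}\times r)(r\times\mathrm{id})(\mathrm{id}\times r)=(r\times\mathrm{id})(\mathrm{id}\times r)(r\times\mathrm{id})$ on $X^3$. A map $k:X\to X$ is a reflection of $(X,r)$ if $r(\mathrm{id}\times k)r(\mathrm{id}\times k)=(\mathrm{id}\times k)r(\mathrm{id}\times k)r$ on $X\times X$; $k$ is $\mathcal G(X,r)$-equivariant if $k\sigma_x=\sigma_x k$ on $X$ for every $x\in X$. *)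

theory Defs
  imports Main
begin

text \<open>The ring N is the whole (possibly non-unital) ring type 'a :: ring.\<close>

fun nprod :: "'a::ring list \<Rightarrow> 'a" where
  "nprod [] = 0"
| "nprod [x] = x"
| "nprod (x # y # ys) = x * nprod (y # ys)"

definition nilpotent_ring :: "'a::ring itself \<Rightarrow> bool" where
  "nilpotent_ring _ \<longleftrightarrow> (\<exists>n>0. \<forall>xs::'a list. length xs = n \<longrightarrow> nprod xs = 0)"

definition adj :: "'a::ring \<Rightarrow> 'a \<Rightarrow> 'a" where
  "adj x y = x + y + x * y"

definition is_subring :: "'a::ring set \<Rightarrow> bool" where
  "is_subring S \<longleftrightarrow> 0 \<in> S \<and> (\<forall>x\<in>S. \<forall>y\<in>S. x + y \<in> S \<and> x * y \<in> S) \<and> (\<forall>x\<in>S. - x \<in> S)"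

definition is_ideal :: "'a::ring set \<Rightarrow> bool" where
  "is_ideal I \<longleftrightarrow> 0 \<in> I \<and> (\<forall>x\<in>I. \<forall>y\<in>I. x + y \<in> I) \<and> (\<forall>x\<in>I. - x \<in> I)
     \<and> (\<forall>x\<in>I. \<forall>a. a * x \<in> I \<and> x * a \<in> I)"

definition dec_s :: "'a::ring set \<Rightarrow> 'a set \<Rightarrow> 'a \<Rightarrow> 'a" where
  "dec_s S I x = (THE s. s \<in> S \<and> (\<exists>i\<in>I. x = adj s i))"

definition dec_i :: "'a::ring set \<Rightarrow> 'a set \<Rightarrow> 'a \<Rightarrow> 'a" where
  "dec_i S I x = (THE i. i \<in> I \<and> (\<exists>s\<in>S. x = adj s i))"

definition bul :: "'a::ring set \<Rightarrow> 'a set \<Rightarrow> 'a \<Rightarrow> 'a \<Rightarrow> 'a" where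
  "bul S I x y = adj (adj (dec_s S I x) y) (dec_i S I x)"

definition binv :: "'a::ring set \<Rightarrow> 'a set \<Rightarrow> 'a \<Rightarrow> 'a" where
  "binv S I x = (THE y. bul S I x y = 0 \<and> bul S I y x = 0)"

definition sig :: "'a::ring set \<Rightarrow> 'a set \<Rightarrow> 'a \<Rightarrow> 'a \<Rightarrow> 'a" where
  "sig S I x y = bul S I x y - x"

definition tau :: "'a::ring set \<Rightarrow> 'a set \<Rightarrow> 'a \<Rightarrow> 'a \<Rightarrow> 'a" where
  "tau S I y x = bul S I (binv S I (sig S I x y)) x - binv S I (sig S I x y)"

definition ybmap :: "'a::ring set \<Rightarrow> 'a set \<Rightarrow> 'a \<times> 'a \<Rightarrow> 'a \<times> 'a" where
  "ybmap S I p = (sig S I (fst p) (snd p), tau S I (snd p) (fst p))"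

definition is_YB_solution :: "'b set \<Rightarrow> ('b \<times> 'b \<Rightarrow> 'b \<times> 'b) \<Rightarrow> bool" where
  "is_YB_solution X r \<longleftrightarrow> r ` (X \<times> X) \<subseteq> X \<times> X \<and>
     (\<forall>x\<in>X. \<forall>y\<in>X. \<forall>z\<in>X.
        (let r12 = (\<lambda>(a,b,c). let (a',b') = r (a,b) in (a',b',c));
             r23 = (\<lambda>(a,b,c). let (b',c') = r (b,c) in (a,b',c'))
         in r23 (r12 (r23 (x,y,z))) = r12 (r23 (r12 (x,y,z)))))"

definition is_reflection :: "'b set \<Rightarrow> ('b \<times> 'b \<Rightarrow> 'b \<times> 'b) \<Rightarrow> ('b \<Rightarrow> 'b) \<Rightarrow> bool" where
  "is_reflection X r k \<longleftrightarrow> (\<forall>x\<in>X. \<forall>y\<in>X.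
     r (apsnd k (r (apsnd k (x, y)))) = apsnd k (r (apsnd k (r (x, y)))))"

end

(*
  Write x = s \<circ> i with s \<in> S, i \<in> I. Then \<sigma>\<^sub>x z = (1 + s) z (1 + i), so \<sigma>\<^sub>x is
  additive, is inverted by \<sigma> of the \<bullet>-inverse of x (nilpotency makes s and i
  quasi-invertible), maps J onto J, and depends on x only modulo J. The hypotheses
  give \<sigma>\<^sub>u (k b) = f (\<sigma>\<^sub>u b) \<and> g b, hence \<sigma>\<^sub>u (k b) = \<sigma>\<^sub>v (k b') whenever \<sigma>\<^sub>u b = \<sigma>\<^sub>v b'
  and u \<equiv> v mod J. As \<tau>\<^sub>y x is determined by \<sigma>\<^bsub>\<sigma>\<^sub>x y\<^esub> (\<tau>\<^sub>y x) = x, both components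
  of the reflection equation follow from two applications of this.
*)

theory Submission
  imports Defs
begin

lemma adj_assoc: "adj (adj a b) c = adj a (adj b (c::'a::ring))"
  unfolding adj_def by (simp add: algebra_simps)

lemma adj_zero [simp]: "adj 0 x = x" "adj x 0 = (x::'a::ring)"
  by (simp_all add: adj_def)

lemma nprod_Cons: "xs \<noteq> [] \<Longrightarrow> nprod (x # xs) = x * nprod xs"
  by (cases xs) auto

lemma subring_closed:
  assumes "is_subring S"
  shows "0 \<in> S" "a \<in> S \<Longrightarrow> b \<in> S \<Longrightarrow> a + b \<in> S" "a \<in> S \<Longrightarrow> - a \<in> S"
    "a \<in> S \<Longrightarrow> b \<in> S \<Longrightarrow> a - b \<in> S" "a \<in> S \<Longrightarrow> b \<in> S \<Longrightarrow> a * b \<in> S"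
  using assms unfolding is_subring_def by auto (metis diff_conv_add_uminus)

lemma subring_UNIV: "is_subring UNIV"
  by (simp add: is_subring_def)

lemma ideal_imp_subring: "is_ideal I \<Longrightarrow> is_subring I"
  by (simp add: is_ideal_def is_subring_def)

lemma ideal_closed:
  assumes "is_ideal I"
  shows "a \<in> I \<Longrightarrow> b \<in> I \<Longrightarrow> a + b \<in> I" "a \<in> I \<Longrightarrow> - a \<in> I"
    "a \<in> I \<Longrightarrow> b \<in> I \<Longrightarrow> a - b \<in> I" "a \<in> I \<Longrightarrow> x * a \<in> I" "a \<in> I \<Longrightarrow> a * x \<in> I"
  using assms unfolding is_ideal_def by auto (metis diff_conv_add_uminus)

text \<open>Partial sums of \<open>-a + a\<^sup>2 - a\<^sup>3 + \<dots>\<close>; in a nilpotent ring the series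
  terminates and is the adjoint inverse of \<open>a\<close>.\<close>
primrec quasi_inv_approx :: "'a::ring \<Rightarrow> nat \<Rightarrow> 'a" where
  "quasi_inv_approx a 0 = 0"
| "quasi_inv_approx a (Suc m) = - a - a * quasi_inv_approx a m"

lemma adj_quasi_inv_approx:
  "adj a (quasi_inv_approx a m) = nprod (replicate m (- a) @ [a])"
proof (induction m)
  case 0
  then show ?case by simp
next
  case (Suc m)
  have "adj a (quasi_inv_approx a (Suc m)) = - a * adj a (quasi_inv_approx a m)"
    by (simp add: adj_def algebra_simps)
  then show ?case using Suc by (simp add: nprod_Cons)
qed

lemma quasi_inv_approx_mem: "is_subring P \<Longrightarrow> a \<in> P \<Longrightarrow> quasi_inv_approx a m \<in> P"
  by (induction m) (simp_all add: subring_closed)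

lemma right_quasi_inverse_mem:
  assumes "nilpotent_ring TYPE('a::ring)" and "is_subring P" and "(a::'a) \<in> P"
  shows "\<exists>b\<in>P. adj a b = 0"
proof -
  obtain n where "n > 0" and nprod_zero: "\<And>xs::'a list. length xs = n \<Longrightarrow> nprod xs = 0"
    using assms(1) unfolding nilpotent_ring_def by blast
  then have "adj a (quasi_inv_approx a (n - 1)) = 0"
    by (simp add: adj_quasi_inv_approx)
  then show ?thesis using quasi_inv_approx_mem assms(2,3) by blast
qed

lemma adj_right_inverse_imp_left:
  assumes "nilpotent_ring TYPE('a::ring)" and ab: "adj (a::'a) b = 0"
  shows "adj b a = 0"
proof -
  obtain c where bc: "adj b c = 0"
    using right_quasi_inverse_mem[OF assms(1) subring_UNIV] by blast
  have "a = adj (adj a b) c" using bc by (simp add: adj_assoc)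
  also have "\<dots> = c" using ab by simp
  finally show ?thesis using bc by simp
qed

lemma quasi_inverse_mem:
  assumes "nilpotent_ring TYPE('a::ring)" and "is_subring P" and "(a::'a) \<in> P"
  shows "\<exists>b\<in>P. adj a b = 0 \<and> adj b a = 0"
  using right_quasi_inverse_mem[OF assms] adj_right_inverse_imp_left[OF assms(1)] by blast

lemma adj_left_cancel:
  assumes "nilpotent_ring TYPE('a::ring)" and "adj (a::'a) x = adj a y"
  shows "x = y"
proof -
  obtain b where "adj b a = 0"
    using quasi_inverse_mem[OF assms(1) subring_UNIV] by blast
  then have "adj b (adj a z) = z" for z by (simp flip: adj_assoc)
  then show ?thesis by (metis assms(2))
qed

text \<open>\<open>sandwich s i z\<close> is \<open>(1 + s) z (1 + i)\<close>, written without a unit.\<close>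
definition sandwich :: "'a::ring \<Rightarrow> 'a \<Rightarrow> 'a \<Rightarrow> 'a" where
  "sandwich s i z = z + s * z + z * i + s * z * i"

lemma adj_adj_diff_adj: "adj (adj s z) i - adj s i = sandwich s i z"
  by (simp add: adj_def sandwich_def algebra_simps)

lemma sandwich_sandwich:
  "sandwich s i (sandwich s' i' z) = sandwich (adj s s') (adj i' i) z"
  by (simp add: adj_def sandwich_def algebra_simps)

lemma sandwich_zero [simp]: "sandwich 0 0 z = z"
  by (simp add: sandwich_def)

lemma sandwich_diff: "sandwich s i (a - b) = sandwich s i a - sandwich s i b"
  by (simp add: sandwich_def algebra_simps)

lemma sandwich_mem_ideal: "is_ideal J \<Longrightarrow> z \<in> J \<Longrightarrow> sandwich s i z \<in> J"
  unfolding sandwich_def by (simp add: ideal_closed)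

lemma sandwich_diff_mem_ideal:
  assumes "is_ideal J" and "i - i' \<in> J"
  shows "sandwich s i z - sandwich s i' z \<in> J"
proof -
  have "sandwich s i z - sandwich s i' z = z * (i - i') + s * (z * (i - i'))"
    by (simp add: sandwich_def algebra_simps)
  then show ?thesis using assms by (simp add: ideal_closed)
qed

locale decomposed_nilpotent_ring =
  fixes S I :: "'a::ring set"
  assumes nilpotent: "nilpotent_ring TYPE('a)"
    and subring_S: "is_subring S" and ideal_I: "is_ideal I"
    and S_inter_I: "S \<inter> I = {0}" and S_plus_I: "\<forall>x. \<exists>s\<in>S. \<exists>i\<in>I. x = s + i"
begin

lemma decomposition_exists: "\<exists>s\<in>S. \<exists>i\<in>I. x = adj s i"
proof -
  obtain s i where s: "s \<in> S" and i: "i \<in> I" and x: "x = s + i"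
    using S_plus_I by blast
  obtain s' where s': "s' \<in> S" "adj s s' = 0" "adj s' s = 0"
    using quasi_inverse_mem[OF nilpotent subring_S s] by blast
  have "adj s' x = i + s' * i"
    using s' by (simp add: x adj_def algebra_simps)
  then have "adj s' x \<in> I"
    using i by (simp add: ideal_closed[OF ideal_I])
  moreover have "x = adj s (adj s' x)"
    using s' by (simp flip: adj_assoc)
  ultimately show ?thesis using s by blast
qed

lemma S_component_eq:
  assumes "s1 \<in> S" "s2 \<in> S" "i1 \<in> I" "i2 \<in> I" and "adj s1 i1 - adj s2 i2 \<in> I"
  shows "s1 = s2"
proof -
  have "s1 - s2 = (adj s1 i1 - adj s2 i2) - ((i1 + s1 * i1) - (i2 + s2 * i2))"
    by (simp add: adj_def algebra_simps)
  also have "\<dots> \<in> I"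
    using assms by (simp add: ideal_closed[OF ideal_I])
  finally have "s1 - s2 \<in> S \<inter> I"
    using assms(1,2) subring_S subring_closed(4) by blast
  then show ?thesis using S_inter_I by simp
qed

lemma decomposition_unique:
  assumes "s1 \<in> S" "s2 \<in> S" "i1 \<in> I" "i2 \<in> I" and "adj s1 i1 = adj s2 i2"
  shows "s1 = s2 \<and> i1 = i2"
proof -
  have "s1 = s2"
    using S_component_eq[OF assms(1-4)] assms(5) ideal_I by (simp add: is_ideal_def)
  then show ?thesis using assms(5) adj_left_cancel[OF nilpotent] by blast
qed

lemma dec_adj:
  assumes "s \<in> S" "i \<in> I"
  shows "dec_s S I (adj s i) = s" "dec_i S I (adj s i) = i"
  unfolding dec_s_def dec_i_def
  by (rule the_equality; use assms decomposition_unique in blast)+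

lemma dec_mem: "dec_s S I x \<in> S" "dec_i S I x \<in> I"
  and adj_dec: "adj (dec_s S I x) (dec_i S I x) = x"
  using decomposition_exists[of x] dec_adj by auto

lemma dec_s_eq_if_diff_mem: "u - v \<in> I \<Longrightarrow> dec_s S I u = dec_s S I v"
  using S_component_eq[OF dec_mem(1)[of u] dec_mem(1)[of v] dec_mem(2)[of u] dec_mem(2)[of v]]
  by (simp add: adj_dec)

lemma sig_eq_sandwich: "sig S I u z = sandwich (dec_s S I u) (dec_i S I u) z"
  unfolding sig_def bul_def using adj_adj_diff_adj[of "dec_s S I u" z "dec_i S I u"]
  by (simp add: adj_dec)

lemma binv_eq:
  assumes "s' \<in> S" "i' \<in> I"
    and "adj (dec_s S I u) s' = 0" "adj s' (dec_s S I u) = 0"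
    and "adj (dec_i S I u) i' = 0" "adj i' (dec_i S I u) = 0"
  shows "binv S I u = adj s' i'"
proof -
  define s i where "s = dec_s S I u" and "i = dec_i S I u"
  have u: "u = adj s i" using adj_dec s_def i_def by simp
  have inv: "adj s s' = 0" "adj s' s = 0" "adj i i' = 0" "adj i' i = 0"
    using assms(3-6) by (simp_all add: s_def i_def)
  have right: "bul S I u y = 0 \<longleftrightarrow> y = adj s' i'" for y
  proof
    assume "bul S I u y = 0"
    then have "adj s (adj y i) = adj s s'"
      using inv by (simp add: bul_def adj_assoc flip: s_def i_def)
    then have "adj y i = s'"
      by (rule adj_left_cancel[OF nilpotent])
    then have "adj (adj y i) i' = adj s' i'" by simp
    then show "y = adj s' i'" using inv by (simp add: adj_assoc)
  next
    assume "y = adj s' i'"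
    then show "bul S I u y = 0"
      using inv by (simp add: bul_def adj_assoc flip: s_def i_def)
  qed
  have left: "bul S I (adj s' i') u = 0"
    unfolding bul_def dec_adj[OF assms(1,2)] u using inv by (simp flip: adj_assoc)
  show ?thesis unfolding binv_def
    using right left by blast
qed

lemma sig_binv: "sig S I u (sig S I (binv S I u) z) = z" "sig S I (binv S I u) (sig S I u z) = z"
proof -
  obtain s' where s': "s' \<in> S" "adj (dec_s S I u) s' = 0" "adj s' (dec_s S I u) = 0"
    using quasi_inverse_mem[OF nilpotent subring_S dec_mem(1)] by blast
  obtain i' where i': "i' \<in> I" "adj (dec_i S I u) i' = 0" "adj i' (dec_i S I u) = 0"
    using quasi_inverse_mem[OF nilpotent ideal_imp_subring[OF ideal_I] dec_mem(2)] by blast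
  have "binv S I u = adj s' i'" using binv_eq s' i' by blast
  then show "sig S I u (sig S I (binv S I u) z) = z" "sig S I (binv S I u) (sig S I u z) = z"
    using s' i' by (simp_all add: sig_eq_sandwich dec_adj sandwich_sandwich)
qed

lemma sig_inj: "sig S I u a = sig S I u b \<Longrightarrow> a = b"
  using sig_binv(2) by metis

lemma sig_diff: "sig S I u (a - b) = sig S I u a - sig S I u b"
  by (simp add: sig_eq_sandwich sandwich_diff)

lemma sig_sig_tau: "sig S I (sig S I x y) (tau S I y x) = x"
  unfolding tau_def sig_def[symmetric] by (rule sig_binv(1))

end

locale decomposition_with_ideal = decomposed_nilpotent_ring +
  fixes J :: "'a::ring set"
  assumes ideal_J: "is_ideal J" and J_subset_I: "J \<subseteq> I"
begin

lemma sig_mem_J: "d \<in> J \<Longrightarrow> sig S I u d \<in> J"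
  by (simp add: sig_eq_sandwich sandwich_mem_ideal ideal_J)

lemma sig_mem_J_iff: "sig S I u d \<in> J \<longleftrightarrow> d \<in> J"
  using sig_mem_J sig_binv(2) by metis

lemma sig_diff_mem_J: "p - q \<in> J \<Longrightarrow> sig S I u p - sig S I u q \<in> J"
  by (simp flip: sig_diff add: sig_mem_J_iff)

text \<open>As \<open>J \<subseteq> I\<close>, \<open>u\<close> and \<open>v\<close> have the same \<open>S\<close>-component, and their
  \<open>I\<close>-components are congruent modulo \<open>J\<close>.\<close>
lemma sig_diff_mem_J_if_diff_mem_J:
  assumes uv: "u - v \<in> J"
  shows "sig S I u z - sig S I v z \<in> J"
proof -
  define s i i' where "s = dec_s S I u" and "i = dec_i S I u" and "i' = dec_i S I v"
  have s_v: "dec_s S I v = s"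
    using dec_s_eq_if_diff_mem[of u v] uv J_subset_I unfolding s_def by auto
  have u: "u = adj s i" and v: "v = adj s i'"
    using adj_dec[of u] adj_dec[of v] by (simp_all add: s_v flip: s_def i_def i'_def)
  have "u - v = sandwich s 0 (i - i')"
    unfolding u v by (simp add: adj_def sandwich_def algebra_simps)
  moreover obtain s' where "adj s' s = 0"
    using quasi_inverse_mem[OF nilpotent subring_S dec_mem(1)[of u]] unfolding s_def by blast
  ultimately have "i - i' = sandwich s' 0 (u - v)"
    by (simp add: sandwich_sandwich)
  then have "i - i' \<in> J" using uv sandwich_mem_ideal ideal_J by simp
  then show ?thesis
    unfolding sig_eq_sandwich s_v by (simp add: sandwich_diff_mem_ideal ideal_J flip: s_def i_def i'_def)
qed

lemma diff_mem_J_if_sig_eq: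
  assumes "sig S I u p = sig S I v q" and "u - v \<in> J"
  shows "p - q \<in> J"
proof -
  have "v - u \<in> J" using ideal_closed(2)[OF ideal_J assms(2)] by simp
  then have "sig S I v q - sig S I u q \<in> J" by (rule sig_diff_mem_J_if_diff_mem_J)
  then have "sig S I u (p - q) \<in> J" using assms(1) by (simp add: sig_diff)
  then show ?thesis by (simp add: sig_mem_J_iff)
qed

end

locale reflection_setting = decomposition_with_ideal +
  fixes X :: "'a::ring set" and f g k :: "'a \<Rightarrow> 'a" and w :: "'a \<Rightarrow> 'a \<Rightarrow> 'a"
  assumes ybmap_closed: "ybmap S I ` (X \<times> X) \<subseteq> X \<times> X"
    and f_mem: "x \<in> X \<Longrightarrow> f x \<in> X" and g_mem: "x \<in> X \<Longrightarrow> g x \<in> X"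
    and w_mem: "x \<in> X \<Longrightarrow> y \<in> X \<Longrightarrow> w x y \<in> X"
    and k_eq: "x \<in> X \<Longrightarrow> k x = w (f x) (g x)"
    and f_equivariant: "x \<in> X \<Longrightarrow> y \<in> X \<Longrightarrow> f (sig S I x y) = sig S I x (f y)"
    and sig_w: "x \<in> X \<Longrightarrow> y \<in> X \<Longrightarrow> z \<in> X \<Longrightarrow> sig S I x (w y (g z)) = w (sig S I x y) (g z)"
    and g_J_invariant: "x \<in> X \<Longrightarrow> j \<in> J \<Longrightarrow> x + j \<in> X \<Longrightarrow> g (x + j) = g x"
    and k_diff_mem_J: "x \<in> X \<Longrightarrow> k x - x \<in> J"
begin

lemma sig_mem: "x \<in> X \<Longrightarrow> y \<in> X \<Longrightarrow> sig S I x y \<in> X"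
  and tau_mem: "x \<in> X \<Longrightarrow> y \<in> X \<Longrightarrow> tau S I y x \<in> X"
  using ybmap_closed by (force simp: ybmap_def)+

lemma k_mem: "x \<in> X \<Longrightarrow> k x \<in> X"
  by (simp add: k_eq f_mem g_mem w_mem)

lemma g_eq_if_diff_mem_J: "p \<in> X \<Longrightarrow> q \<in> X \<Longrightarrow> p - q \<in> J \<Longrightarrow> g p = g q"
  using g_J_invariant[of q "p - q"] by simp

lemma sig_k: "u \<in> X \<Longrightarrow> b \<in> X \<Longrightarrow> sig S I u (k b) = w (f (sig S I u b)) (g b)"
  by (simp add: k_eq sig_w f_mem f_equivariant)

lemma sig_k_diff_mem_J: "b \<in> X \<Longrightarrow> sig S I u (k b) - sig S I u b \<in> J"
  by (simp add: sig_diff_mem_J k_diff_mem_J)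

lemma sig_k_eq_if_sig_eq:
  assumes "u \<in> X" "v \<in> X" "b \<in> X" "b' \<in> X"
    and sig_eq: "sig S I u b = sig S I v b'" and uv: "u - v \<in> J"
  shows "sig S I u (k b) = sig S I v (k b')"
proof -
  have "g b = g b'"
    using diff_mem_J_if_sig_eq[OF sig_eq uv] g_eq_if_diff_mem_J assms(3,4) by blast
  then show ?thesis using sig_k assms(1-4) sig_eq by simp
qed

context
  fixes x y assumes x: "x \<in> X" and y: "y \<in> X"
begin

lemma reflection_fst:
  "sig S I (sig S I x (k y)) (k (tau S I (k y) x)) = sig S I (sig S I x y) (k (tau S I y x))"
  by (rule sig_k_eq_if_sig_eq)
    (simp_all add: x y k_mem sig_mem tau_mem sig_sig_tau sig_k_diff_mem_J)

lemma reflection_snd: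
  "tau S I (k (tau S I (k y) x)) (sig S I x (k y)) = k (tau S I (k (tau S I y x)) (sig S I x y))"
proof -
  define a' b' where "a' = sig S I x y" and "b' = tau S I y x"
  define c q where "c = sig S I a' (k b')" and "q = tau S I (k b') a'"
  have X: "a' \<in> X" "b' \<in> X" "c \<in> X" "q \<in> X"
    using x y by (simp_all add: a'_def b'_def c_def q_def k_mem sig_mem tau_mem)
  have "sig S I c (k q) = sig S I x (k y)"
  proof (rule sig_k_eq_if_sig_eq)
    show "sig S I c q = sig S I x y"
      by (simp add: c_def q_def a'_def sig_sig_tau)
    have "c - sig S I a' b' \<in> J"
      using sig_k_diff_mem_J X unfolding c_def by blast
    then show "c - x \<in> J" by (simp add: a'_def b'_def sig_sig_tau)
  qed (use X x y in auto)
  also have "\<dots> = sig S I c (tau S I (k (tau S I (k y) x)) (sig S I x (k y)))"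
    using sig_sig_tau[of "sig S I x (k y)" "k (tau S I (k y) x)"] reflection_fst
    by (simp add: c_def a'_def b'_def)
  finally have "k q = tau S I (k (tau S I (k y) x)) (sig S I x (k y))"
    by (rule sig_inj)
  then show ?thesis by (simp add: q_def a'_def b'_def)
qed

end

theorem is_reflection_k: "is_reflection X (ybmap S I) k"
  unfolding is_reflection_def
  by (simp add: ybmap_def reflection_fst reflection_snd)

end

theorem mainTheorem9:
  fixes S I J X :: "'a::ring set"
    and f g :: "'a \<Rightarrow> 'a" and w :: "'a \<Rightarrow> 'a \<Rightarrow> 'a" and k :: "'a \<Rightarrow> 'a"
  assumes nil: "nilpotent_ring TYPE('a)"
    and S: "is_subring S" and I: "is_ideal I"
    and SI0: "S \<inter> I = {0}" and NSI: "\<forall>x. \<exists>s\<in>S. \<exists>i\<in>I. x = s + i"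
    and sol: "is_YB_solution X (ybmap S I)"
    and J: "is_ideal J" and JIX: "J \<subseteq> I \<inter> X"
    and fX: "\<forall>x\<in>X. f x \<in> X" and gX: "\<forall>x\<in>X. g x \<in> X"
    and wX: "\<forall>x\<in>X. \<forall>y\<in>X. w x y \<in> X"
    and k_def: "\<forall>x. k x = w (f x) (g x)"
    and f_eq: "\<forall>x\<in>X. \<forall>y\<in>X. f (sig S I x y) = sig S I x (f y)"
    and sw: "\<forall>x\<in>X. \<forall>y\<in>X. \<forall>z\<in>X. sig S I x (w y (g z)) = w (sig S I x y) (g z)"
    and gJ: "\<forall>x\<in>X. \<forall>j\<in>J. x + j \<in> X \<longrightarrow> g (x + j) = g x"
    and kJ: "\<forall>x\<in>X. k x - x \<in> J"
  shows "is_reflection X (ybmap S I) k"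
proof -
  interpret reflection_setting S I J X f g k w
    using assms by unfold_locales (auto simp: is_YB_solution_def)
  show ?thesis by (rule is_reflection_k)
qed

end
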